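(* Let $G=(V,E,C,\ell)$ be an edge-labeled hypergraph with $C=\{1,\dots,k\}$, and consider the linear program \[ \min \sum_{e\in E} x_e \quad\text{s.t.}\quad \sum_{c=1}^k x_v^c=k-1\ \ \forall v\in V;\qquad x_v^c\le x_e\ \ \forall c\in C,\ \forall e\in E \text{ with } \ell(e)=c,\ \forall v\in e;\qquad 0\le x_v^c\le 1,\ 0\le x_e\le 1. \] Let $(x_v^c,x_e)$ be an optimal solution of this LP. For each $c\in C$ let $S_c=\{v\in V: x_v^c<1/2\}$, set $Y[i]=c$ for every $i\in S_c$, and assign every node lying in no $S_c$ to an arbitrary category. Then $Y$ is a well-defined clustering and $\mathrm{CatEdgeClus}(Y)\le 2\min_{Y':V\to C}\mathrm{CatEdgeClus}(Y')$.
   Context: An edge-labeled hypergraph $G=(V,E,C,\ell)$ consists of a finite node set $V$, a finite collection $E$ of hyperedges (nonempty subsets of $V$), a finite set $C$ of categories, and a labeling $\ell:E\to C$. A clustering is a map $Y:V\to C$. For $e\in E$, $m_Y(e)=1$ if $Y[i]\neq\ell(e)$ for some $i\in e$, and $m_Y(e)=0$ otherwise; $\mathrm{CatEdgeClus}(Y)=\sum_{e\in E}m_Y(e)$. *)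

theory Defs
  imports Complex_Main
begin

text \<open>Edge-labeled hypergraph: nodes V, hyperedges indexed by a finite set E of edge
  identifiers (so repeated hyperedges are allowed), edge e is the node set of hyperedge e,
  categories C = {1..k}, labeling lab.\<close>

definition edge_labeled_hypergraph ::
  "'v set \<Rightarrow> 'e set \<Rightarrow> ('e \<Rightarrow> 'v set) \<Rightarrow> nat \<Rightarrow> ('e \<Rightarrow> nat) \<Rightarrow> bool" where
  "edge_labeled_hypergraph V E edge k lab \<longleftrightarrow>
     finite V \<and> finite E \<and>
     (\<forall>e\<in>E. edge e \<noteq> {} \<and> edge e \<subseteq> V) \<and>
     (\<forall>e\<in>E. lab e \<in> {1..k})"

definition mistake :: "('e \<Rightarrow> 'v set) \<Rightarrow> ('e \<Rightarrow> nat) \<Rightarrow> ('v \<Rightarrow> nat) \<Rightarrow> 'e \<Rightarrow> nat" where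
  "mistake edge lab Y e = (if \<exists>i\<in>edge e. Y i \<noteq> lab e then 1 else 0)"

definition CatEdgeClus :: "'e set \<Rightarrow> ('e \<Rightarrow> 'v set) \<Rightarrow> ('e \<Rightarrow> nat) \<Rightarrow> ('v \<Rightarrow> nat) \<Rightarrow> nat" where
  "CatEdgeClus E edge lab Y = (\<Sum>e\<in>E. mistake edge lab Y e)"

definition lp_feasible ::
  "'v set \<Rightarrow> 'e set \<Rightarrow> ('e \<Rightarrow> 'v set) \<Rightarrow> nat \<Rightarrow> ('e \<Rightarrow> nat)
   \<Rightarrow> ('v \<Rightarrow> nat \<Rightarrow> real) \<Rightarrow> ('e \<Rightarrow> real) \<Rightarrow> bool" where
  "lp_feasible V E edge k lab xv xe \<longleftrightarrow>
     (\<forall>v\<in>V. (\<Sum>c=1..k. xv v c) = real k - 1) \<and>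
     (\<forall>c\<in>{1..k}. \<forall>e\<in>E. lab e = c \<longrightarrow> (\<forall>v\<in>edge e. xv v c \<le> xe e)) \<and>
     (\<forall>v\<in>V. \<forall>c\<in>{1..k}. 0 \<le> xv v c \<and> xv v c \<le> 1) \<and>
     (\<forall>e\<in>E. 0 \<le> xe e \<and> xe e \<le> 1)"

definition lp_optimal ::
  "'v set \<Rightarrow> 'e set \<Rightarrow> ('e \<Rightarrow> 'v set) \<Rightarrow> nat \<Rightarrow> ('e \<Rightarrow> nat)
   \<Rightarrow> ('v \<Rightarrow> nat \<Rightarrow> real) \<Rightarrow> ('e \<Rightarrow> real) \<Rightarrow> bool" where
  "lp_optimal V E edge k lab xv xe \<longleftrightarrow>
     lp_feasible V E edge k lab xv xe \<and>
     (\<forall>yv ye. lp_feasible V E edge k lab yv ye \<longrightarrow> (\<Sum>e\<in>E. xe e) \<le> (\<Sum>e\<in>E. ye e))"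

definition S_set :: "'v set \<Rightarrow> ('v \<Rightarrow> nat \<Rightarrow> real) \<Rightarrow> nat \<Rightarrow> 'v set" where
  "S_set V xv c = {v\<in>V. xv v c < 1/2}"

definition rounded_clustering ::
  "'v set \<Rightarrow> nat \<Rightarrow> ('v \<Rightarrow> nat \<Rightarrow> real) \<Rightarrow> ('v \<Rightarrow> nat) \<Rightarrow> bool" where
  "rounded_clustering V k xv Y \<longleftrightarrow>
     (\<forall>v\<in>V. Y v \<in> {1..k}) \<and>
     (\<forall>c\<in>{1..k}. \<forall>v\<in>S_set V xv c. Y v = c)"

end

theory Submission
  imports Defs
begin

text \<open>The LP is a relaxation: every clustering yields a feasible point whose objective is its
  number of mistakes, so the LP optimum is at most the optimal clustering cost. Since the
  k coordinates of a node lie in [0,1] and sum to k - 1, at most one of them is below 1/2,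
  so the sets S_c are disjoint. If the rounded clustering makes a mistake at an edge e, some
  node v of e is not in S_(lab e), so x_e \<ge> x_v^(lab e) \<ge> 1/2: every mistake costs the LP
  at least 1/2.\<close>

lemma sum_le_pair_plus_card:
  fixes x :: "'a \<Rightarrow> real"
  assumes "finite A" "c \<in> A" "c' \<in> A" "c \<noteq> c'" "\<And>d. d \<in> A \<Longrightarrow> x d \<le> 1"
  shows "sum x A \<le> x c + x c' + (real (card A) - 2)"
proof -
  have "sum x A = sum x {c, c'} + sum x (A - {c, c'})"
    using assms(1-3) by (metis empty_subsetI insert_subset sum.subset_diff add.commute)
  also have "sum x (A - {c, c'}) \<le> (\<Sum>d\<in>A - {c, c'}. 1)"
    by (rule sum_mono) (use assms(5) in auto)
  also have "(\<Sum>d\<in>A - {c, c'}. 1::real) = real (card A) - 2"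
  proof -
    have "card {c, c'} \<le> card A"
      using assms(1-3) by (intro card_mono) auto
    then show ?thesis
      using assms(1-4) by (simp add: card_Diff_subset of_nat_diff)
  qed
  finally show ?thesis using assms(4) by simp
qed

lemma S_set_disjoint:
  assumes "lp_feasible V E edge k lab xv xe" "c \<in> {1..k}" "c' \<in> {1..k}" "c \<noteq> c'"
  shows "S_set V xv c \<inter> S_set V xv c' = {}"
proof (rule ccontr)
  assume "S_set V xv c \<inter> S_set V xv c' \<noteq> {}"
  then obtain v where v: "v \<in> V" "xv v c < 1/2" "xv v c' < 1/2"
    unfolding S_set_def by auto
  have "(\<Sum>d=1..k. xv v d) = real k - 1" and "\<And>d. d \<in> {1..k} \<Longrightarrow> xv v d \<le> 1"
    using assms(1) v(1) unfolding lp_feasible_def by auto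
  with sum_le_pair_plus_card[of "{1..k}" c c' "xv v"] assms(2-4) v(2,3) show False
    by simp
qed

lemma sum_if_eq_0_else_1:
  assumes "finite A" "y \<in> A"
  shows "(\<Sum>c\<in>A. if y = c then 0 else 1::real) = real (card A) - 1"
proof -
  have "(\<Sum>c\<in>A. if y = c then 0 else 1::real) = (\<Sum>c\<in>A - {y}. 1)"
    by (rule sum.mono_neutral_cong_right) (use assms in auto)
  also have "\<dots> = real (card A) - 1"
  proof -
    have "0 < card A" using assms card_gt_0_iff by blast
    then show ?thesis using assms by (simp add: of_nat_diff)
  qed
  finally show ?thesis .
qed

lemma lp_feasible_clustering:
  assumes "\<forall>v\<in>V. Y v \<in> {1..k}"
  shows "lp_feasible V E edge k lab (\<lambda>v c. if Y v = c then 0 else 1)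
           (\<lambda>e. real (mistake edge lab Y e))"
  unfolding lp_feasible_def
proof (intro conjI ballI impI)
  fix v assume "v \<in> V"
  then show "(\<Sum>c=1..k. if Y v = c then 0 else 1) = real k - 1"
    using assms sum_if_eq_0_else_1[of "{1..k}" "Y v"] by simp
qed (auto simp: mistake_def)

lemma lp_optimal_le_CatEdgeClus:
  assumes "lp_optimal V E edge k lab xv xe" "\<forall>v\<in>V. Y v \<in> {1..k}"
  shows "(\<Sum>e\<in>E. xe e) \<le> real (CatEdgeClus E edge lab Y)"
  using assms lp_feasible_clustering[OF assms(2)]
  unfolding lp_optimal_def CatEdgeClus_def by fastforce

lemma mistake_rounded_le_twice_lp:
  assumes "lp_feasible V E edge k lab xv xe" "rounded_clustering V k xv Y"
    and "e \<in> E" "edge e \<subseteq> V" "lab e \<in> {1..k}"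
  shows "real (mistake edge lab Y e) \<le> 2 * xe e"
proof (cases "\<exists>i\<in>edge e. Y i \<noteq> lab e")
  case True
  then obtain i where i: "i \<in> edge e" "Y i \<noteq> lab e" by auto
  with assms(2,4,5) have "i \<notin> S_set V xv (lab e)"
    unfolding rounded_clustering_def by auto
  with i(1) assms(4) have "1/2 \<le> xv i (lab e)"
    unfolding S_set_def by auto
  also have "xv i (lab e) \<le> xe e"
    using assms(1,3,5) i(1) unfolding lp_feasible_def by blast
  finally show ?thesis using True unfolding mistake_def by simp
next
  case False
  with assms(1,3) show ?thesis unfolding lp_feasible_def mistake_def by simp
qed

lemma CatEdgeClus_rounded_le_twice_lp:
  assumes "edge_labeled_hypergraph V E edge k lab" "lp_feasible V E edge k lab xv xe"
    and "rounded_clustering V k xv Y"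
  shows "real (CatEdgeClus E edge lab Y) \<le> 2 * (\<Sum>e\<in>E. xe e)"
proof -
  have "real (CatEdgeClus E edge lab Y) = (\<Sum>e\<in>E. real (mistake edge lab Y e))"
    unfolding CatEdgeClus_def by simp
  also have "\<dots> \<le> (\<Sum>e\<in>E. 2 * xe e)"
  proof (rule sum_mono)
    fix e assume "e \<in> E"
    with assms(1) have "edge e \<subseteq> V" "lab e \<in> {1..k}"
      unfolding edge_labeled_hypergraph_def by auto
    with assms(2,3) \<open>e \<in> E\<close> show "real (mistake edge lab Y e) \<le> 2 * xe e"
      by (rule mistake_rounded_le_twice_lp)
  qed
  finally show ?thesis by (simp add: sum_distrib_left)
qed

theorem mainTheorem5:
  fixes V :: "'v set" and E :: "'e set" and edge :: "'e \<Rightarrow> 'v set"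
    and k :: nat and lab :: "'e \<Rightarrow> nat"
    and xv :: "'v \<Rightarrow> nat \<Rightarrow> real" and xe :: "'e \<Rightarrow> real"
  assumes "edge_labeled_hypergraph V E edge k lab"
    and "lp_optimal V E edge k lab xv xe"
  shows "(\<forall>c\<in>{1..k}. \<forall>c'\<in>{1..k}. c \<noteq> c' \<longrightarrow> S_set V xv c \<inter> S_set V xv c' = {})
    \<and> (\<forall>Y. rounded_clustering V k xv Y \<longrightarrow>
          (\<forall>Y'. (\<forall>v\<in>V. Y' v \<in> {1..k}) \<longrightarrow>
             CatEdgeClus E edge lab Y \<le> 2 * CatEdgeClus E edge lab Y'))"
proof (intro conjI allI ballI impI)
  have feasible: "lp_feasible V E edge k lab xv xe"
    using assms(2) unfolding lp_optimal_def by blast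
  show "S_set V xv c \<inter> S_set V xv c' = {}" if "c \<in> {1..k}" "c' \<in> {1..k}" "c \<noteq> c'" for c c'
    using S_set_disjoint[OF feasible that] .
  fix Y Y' :: "'v \<Rightarrow> nat"
  assume "rounded_clustering V k xv Y" "\<forall>v\<in>V. Y' v \<in> {1..k}"
  then have "real (CatEdgeClus E edge lab Y) \<le> 2 * real (CatEdgeClus E edge lab Y')"
    using CatEdgeClus_rounded_le_twice_lp[OF assms(1) feasible]
      lp_optimal_le_CatEdgeClus[OF assms(2)] by fastforce
  then show "CatEdgeClus E edge lab Y \<le> 2 * CatEdgeClus E edge lab Y'" by linarith
qed

end
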